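(* Let $c>0$ satisfy $\cosh^2(\tfrac12)+4c^2\sinh^2(\tfrac12)>e^2$. Define $$A^{(1)}=\begin{bmatrix}-1 & c\\ \tfrac{1}{4c} & -1\end{bmatrix},\qquad A^{(2)}=\begin{bmatrix}-1 & \tfrac{1}{4c}\\ c & -1\end{bmatrix},$$ and the $2$-periodic piecewise constant matrix function $A:\mathbb{R}\to\mathbb{R}^{2\times2}$ by $A(t)=A^{(1)}$ for $t\in[2k,2k+1)$ and $A(t)=A^{(2)}$ for $t\in[2k+1,2k+2)$, $k\in\mathbb{Z}$. Then for every $t\in\mathbb{R}$ the matrix $A(t)$ has positive off-diagonal entries and eigenvalues $-\tfrac12$ (its larger, principal eigenvalue) and $-\tfrac32$. Moreover, the matrix $P=e^{A^{(2)}}e^{A^{(1)}}$ has all entries positive and its larger eigenvalue $\mu$ satisfies $\mu>1$; if $w$ is an eigenvector of $P$ for $\mu$ with positive coordinates, then the solution $x(t)$ of $x'=A(t)x$ with $x(0)=w$ satisfies $x(2n)=\mu^n w$ for all $n=1,2,\dots$, so $\|x(2n)\|\to\infty$ as $n\to\infty$.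
   Context: A solution of $x'=A(t)x$ for this piecewise constant $A$ is a continuous function $\xi:\mathbb{R}\to\mathbb{R}^2$ such that $\xi'(t)=A^{(1)}\xi(t)$ for $t\in(2k,2k+1)$ and $\xi'(t)=A^{(2)}\xi(t)$ for $t\in(2k+1,2k+2)$, $k\in\mathbb{Z}$ (with the corresponding one-sided derivatives at integers); for each initial value at time $0$ there is a unique such solution. $\|\cdot\|$ denotes the Euclidean norm on $\mathbb{R}^2$. *)

theory Defs
  imports "HOL-Analysis.Analysis"
begin

primrec mat_pow :: "real^'n^'n \<Rightarrow> nat \<Rightarrow> real^'n^'n" where
  "mat_pow M 0 = mat 1"
| "mat_pow M (Suc k) = M ** mat_pow M k"

definition mat_exp :: "real^'n^'n \<Rightarrow> real^'n^'n" where
  "mat_exp M = (\<Sum>k. (1 / fact k) *\<^sub>R mat_pow M k)"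

definition eigenvalues :: "real^'n^'n \<Rightarrow> real set" where
  "eigenvalues M = {l. \<exists>v. v \<noteq> 0 \<and> M *v v = l *\<^sub>R v}"

definition A1 :: "real \<Rightarrow> real^2^2" where
  "A1 c = vector [vector [-1, c], vector [1 / (4*c), -1]]"

definition A2 :: "real \<Rightarrow> real^2^2" where
  "A2 c = vector [vector [-1, 1 / (4*c)], vector [c, -1]]"

definition Apw :: "real \<Rightarrow> real \<Rightarrow> real^2^2" where
  "Apw c t = (if even \<lfloor>t\<rfloor> then A1 c else A2 c)"

text \<open>Solution of x' = A(t) x: continuous, satisfying the ODE off the integers
  (where A is constant on a neighbourhood).\<close>
definition is_solution :: "(real \<Rightarrow> real^2^2) \<Rightarrow> (real \<Rightarrow> real^2) \<Rightarrow> bool" where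
  "is_solution A x \<longleftrightarrow> continuous_on UNIV x \<and>
     (\<forall>t. t \<notin> \<int> \<longrightarrow> (x has_vector_derivative (A t *v x t)) (at t))"

end

theory Submission
  imports Defs
begin

text \<open>Each of \<open>A1 c\<close>, \<open>A2 c\<close> equals \<open>-1/2 \<Pi>\<^sub>+ - 3/2 \<Pi>\<^sub>-\<close> for complementary spectral projections, so
  its exponential is explicit, and on a unit interval where \<open>A\<close> is constant the solution is
  propagated by \<open>mat_exp A\<close>: pairing \<open>x\<close> with a left eigenvector turns the ODE into a scalar one.
  Hence \<open>x (2n+2) = P x (2n)\<close> with \<open>P = mat_exp (A2 c) ** mat_exp (A1 c)\<close>. Both pieces are stable,
  but their eigenvectors are swapped, and \<open>P\<close> is a symmetric positive matrix with
  \<open>P\<^sub>2\<^sub>2 = e\<^sup>-\<^sup>2 (cosh\<^sup>2 (1/2) + 4 c\<^sup>2 sinh\<^sup>2 (1/2)) > 1\<close>. Its principal eigenvalue \<open>\<mu>\<close> dominates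
  \<open>P\<^sub>2\<^sub>2\<close>, so \<open>x (2n) = \<mu>\<^sup>n w\<close> blows up.\<close>

definition coupling_mat :: "real \<Rightarrow> real \<Rightarrow> real^2^2" where
  "coupling_mat p q = vector [vector [-1, p], vector [q, -1]]"

lemma A1_eq_coupling_mat: "A1 c = coupling_mat c (1 / (4*c))"
  by (simp add: A1_def coupling_mat_def)

lemma A2_eq_coupling_mat: "A2 c = coupling_mat (1 / (4*c)) c"
  by (simp add: A2_def coupling_mat_def)

lemma coupling_mat_entries:
  "coupling_mat p q $ 1 $ 1 = -1" "coupling_mat p q $ 1 $ 2 = p"
  "coupling_mat p q $ 2 $ 1 = q" "coupling_mat p q $ 2 $ 2 = -1"
  by (simp_all add: coupling_mat_def)

lemma matrix_vector_mult_2: "(M *v v) $ i = M $ i $ 1 * v $ 1 + M $ i $ 2 * (v :: real^2) $ 2"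
  by (simp add: matrix_vector_mult_def sum_2)

lemma matrix_matrix_mult_2:
  "((M::real^2^2) ** N) $ i $ j = M $ i $ 1 * N $ 1 $ j + M $ i $ 2 * N $ 2 $ j"
  by (simp add: matrix_matrix_mult_def sum_2)

lemma inner_vec_2: "(u :: real^2) \<bullet> v = u $ 1 * v $ 1 + u $ 2 * v $ 2"
  by (simp add: inner_vec_def sum_2)

lemma eigenvalues_2x2:
  fixes M :: "real^2^2"
  assumes "M $ 1 $ 2 \<noteq> 0"
  shows "eigenvalues M = {l. (l - M$1$1) * (l - M$2$2) = M$1$2 * M$2$1}"
proof (intro set_eqI iffI; simp)
  fix l assume "l \<in> eigenvalues M"
  then obtain v where v: "v \<noteq> 0" "M *v v = l *\<^sub>R v" unfolding eigenvalues_def by auto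
  have row1: "(l - M$1$1) * v$1 = M$1$2 * v$2"
    using arg_cong[OF v(2), of "\<lambda>u. u$1"] by (simp add: matrix_vector_mult_2 algebra_simps)
  have row2: "(l - M$2$2) * v$2 = M$2$1 * v$1"
    using arg_cong[OF v(2), of "\<lambda>u. u$2"] by (simp add: matrix_vector_mult_2 algebra_simps)
  have "((l - M$1$1) * (l - M$2$2) - M$1$2 * M$2$1) * v$1 = 0"
    using row1 row2 by algebra
  moreover have "((l - M$1$1) * (l - M$2$2) - M$1$2 * M$2$1) * v$2 = 0"
    using row1 row2 by algebra
  moreover have "v$1 \<noteq> 0 \<or> v$2 \<noteq> 0" using v(1) by (auto simp: vec_eq_iff forall_2)
  ultimately show "(l - M$1$1) * (l - M$2$2) = M$1$2 * M$2$1" by auto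
next
  fix l assume char: "(l - M$1$1) * (l - M$2$2) = M$1$2 * M$2$1"
  \<comment> \<open>The first row of \<open>M - l I\<close> is nonzero, so it determines a kernel vector.\<close>
  define v :: "real^2" where "v = vector [M$1$2, l - M$1$1]"
  have "M *v v = l *\<^sub>R v"
    using char by (simp add: v_def vec_eq_iff forall_2 matrix_vector_mult_2 algebra_simps)
  moreover have "v \<noteq> 0" using assms by (metis v_def vector_2(1) zero_index)
  ultimately show "l \<in> eigenvalues M" unfolding eigenvalues_def by blast
qed

lemma eigenvalues_coupling_mat:
  assumes "p \<noteq> 0" "p * q = 1/4"
  shows "eigenvalues (coupling_mat p q) = {-1/2, -3/2}"
proof -
  have "(l + 1) * (l + 1) = 1/4 \<longleftrightarrow> l = -1/2 \<or> l = -3/2" for l :: real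
  proof -
    have "(l + 1) * (l + 1) - 1/4 = (l + 1/2) * (l + 3/2)" by algebra
    then have "(l + 1) * (l + 1) = 1/4 \<longleftrightarrow> l + 1/2 = 0 \<or> l + 3/2 = 0"
      by (simp only: mult_eq_0_iff[symmetric]) linarith
    then show ?thesis by linarith
  qed
  moreover have "eigenvalues (coupling_mat p q) = {l. (l + 1) * (l + 1) = 1/4}"
    using assms(1) by (simp add: eigenvalues_2x2 coupling_mat_entries assms(2))
  ultimately show ?thesis by auto
qed

lemma Apw_offdiag_pos:
  assumes "c > 0"
  shows "Apw c t $ 1 $ 2 > 0" "Apw c t $ 2 $ 1 > 0"
  using assms by (simp_all add: Apw_def A1_eq_coupling_mat A2_eq_coupling_mat coupling_mat_entries)

lemma eigenvalues_Apw:
  assumes "c > 0"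
  shows "eigenvalues (Apw c t) = {-1/2, -3/2}"
  using assms eigenvalues_coupling_mat[of c "1 / (4*c)"] eigenvalues_coupling_mat[of "1 / (4*c)" c]
  by (simp add: Apw_def A1_eq_coupling_mat A2_eq_coupling_mat)

lemma sym_char_root_max:
  fixes a d b :: real
  defines "\<mu> \<equiv> (a + d)/2 + sqrt (((a - d)/2)^2 + b^2)"
  shows "(\<mu> - a) * (\<mu> - d) = b^2"
    and "(l - a) * (l - d) = b^2 \<Longrightarrow> l \<le> \<mu>"
    and "d \<le> \<mu>"
proof -
  define r where "r = sqrt (((a - d)/2)^2 + b^2)"
  have r2: "r^2 = ((a - d)/2)^2 + b^2" and r0: "r \<ge> 0" unfolding r_def by simp_all
  have char_iff: "(l - a) * (l - d) = b^2 \<longleftrightarrow> (l - (a + d)/2)^2 = r^2" for l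
  proof -
    have "(l - a) * (l - d) - b^2 = (l - (a + d)/2)^2 - r^2"
      unfolding r2 by (simp add: power2_eq_square field_simps)
    then show ?thesis by linarith
  qed
  show "(\<mu> - a) * (\<mu> - d) = b^2" unfolding char_iff \<mu>_def r_def[symmetric] by simp
  show "l \<le> \<mu>" if "(l - a) * (l - d) = b^2"
  proof -
    have "\<bar>l - (a + d)/2\<bar> = r" using that r0 unfolding char_iff by (metis power2_eq_iff_nonneg abs_ge_zero power2_abs)
    then show ?thesis unfolding \<mu>_def r_def[symmetric] by linarith
  qed
  have "\<bar>(a - d)/2\<bar> \<le> r" unfolding r_def by (rule real_sqrt_ge_abs1)
  then show "d \<le> \<mu>" unfolding \<mu>_def r_def[symmetric] by (simp add: abs_le_iff field_simps)
qed

subsection \<open>Linear ODEs along left eigenvectors\<close>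

lemma scalar_linear_ode_solution:
  fixes f :: "real \<Rightarrow> real"
  assumes "a < b" "continuous_on {a..b} f"
    and "\<And>t. a < t \<Longrightarrow> t < b \<Longrightarrow> (f has_real_derivative (\<kappa> * f t)) (at t)"
  shows "f b = exp (\<kappa> * (b - a)) * f a"
proof -
  let ?g = "\<lambda>t. exp (- \<kappa> * t) * f t"
  have "?g b = ?g a"
  proof (rule DERIV_isconst_end[OF assms(1)])
    show "continuous_on {a..b} ?g"
      by (intro continuous_intros assms(2))
    fix t assume "a < t" "t < b"
    have "(?g has_real_derivative (- \<kappa> * exp (- \<kappa> * t) * f t + exp (- \<kappa> * t) * (\<kappa> * f t))) (at t)"
      by (auto intro!: derivative_eq_intros assms(3)[OF \<open>a < t\<close> \<open>t < b\<close>])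
    then show "(?g has_real_derivative 0) (at t)" by (simp add: algebra_simps)
  qed
  then show ?thesis
    by (simp add: exp_diff exp_minus right_diff_distrib field_simps)
qed

lemma left_eigvec_linear_ode:
  fixes x :: "real \<Rightarrow> real^'n" and M :: "real^'n^'n"
  assumes "a < b" "continuous_on {a..b} x"
    and "\<And>t. a < t \<Longrightarrow> t < b \<Longrightarrow> (x has_vector_derivative (M *v x t)) (at t)"
    and "\<And>v. l \<bullet> (M *v v) = \<kappa> * (l \<bullet> v)"
  shows "l \<bullet> x b = exp (\<kappa> * (b - a)) * (l \<bullet> x a)"
proof (rule scalar_linear_ode_solution[OF assms(1), where f = "\<lambda>t. l \<bullet> x t"])
  show "continuous_on {a..b} (\<lambda>t. l \<bullet> x t)" by (intro continuous_intros assms(2))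
  fix t assume "a < t" "t < b"
  have "((\<lambda>t. l \<bullet> x t) has_vector_derivative (l \<bullet> (M *v x t))) (at t)"
    by (rule bounded_linear.has_vector_derivative[OF bounded_linear_inner_right assms(3)[OF \<open>a < t\<close> \<open>t < b\<close>]])
  then show "((\<lambda>t. l \<bullet> x t) has_real_derivative \<kappa> * (l \<bullet> x t)) (at t)"
    by (simp add: has_real_derivative_iff_has_vector_derivative assms(4))
qed

lemma left_eigvec_mat_pow:
  fixes M :: "real^'n^'n"
  assumes "\<And>v. l \<bullet> (M *v v) = \<kappa> * (l \<bullet> v)"
  shows "l \<bullet> (mat_pow M k *v v) = \<kappa> ^ k * (l \<bullet> v)"
  by (induction k) (simp_all add: assms matrix_vector_mul_assoc[symmetric])

lemma left_eigvec_mat_exp: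
  fixes M :: "real^'n^'n"
  assumes "summable (\<lambda>k. (1 / fact k) *\<^sub>R mat_pow M k)"
    and "\<And>v. l \<bullet> (M *v v) = \<kappa> * (l \<bullet> v)"
  shows "l \<bullet> (mat_exp M *v v) = exp \<kappa> * (l \<bullet> v)"
proof -
  have "linear (\<lambda>X::real^'n^'n. l \<bullet> (X *v v))"
    by (rule linearI) (simp_all add: matrix_vector_mult_add_rdistrib inner_add_right
        scaleR_matrix_vector_assoc[symmetric])
  then have lin: "bounded_linear (\<lambda>X::real^'n^'n. l \<bullet> (X *v v))"
    by (simp add: linear_conv_bounded_linear)
  have series: "(\<lambda>k. l \<bullet> (((1 / fact k) *\<^sub>R mat_pow M k) *v v)) sums (l \<bullet> (mat_exp M *v v))"
    using bounded_linear.sums[OF lin summable_sums[OF assms(1)]] by (simp add: mat_exp_def)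
  have "(\<lambda>k. l \<bullet> (((1 / fact k) *\<^sub>R mat_pow M k) *v v)) = (\<lambda>k. \<kappa> ^ k / fact k * (l \<bullet> v))"
    by (simp add: scaleR_matrix_vector_assoc[symmetric] left_eigvec_mat_pow[OF assms(2)])
  moreover have "(\<lambda>k. \<kappa> ^ k / fact k * (l \<bullet> v)) sums (exp \<kappa> * (l \<bullet> v))"
    using sums_mult[OF exp_converges[of \<kappa>], of "l \<bullet> v"] by (simp add: divide_inverse ac_simps)
  ultimately show ?thesis using sums_unique2[OF series] by simp
qed

lemma linear_ode_unit_step:
  fixes x :: "real \<Rightarrow> real^'n" and M :: "real^'n^'n" and L :: "(real^'n) set"
  assumes summable: "summable (\<lambda>k. (1 / fact k) *\<^sub>R mat_pow M k)"
    and eig: "\<And>l. l \<in> L \<Longrightarrow> \<exists>\<kappa>. \<forall>v. l \<bullet> (M *v v) = \<kappa> * (l \<bullet> v)"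
    and separating: "\<And>u. (\<forall>l\<in>L. l \<bullet> u = 0) \<Longrightarrow> u = 0"
    and cont: "continuous_on {a..a+1} x"
    and deriv: "\<And>t. a < t \<Longrightarrow> t < a+1 \<Longrightarrow> (x has_vector_derivative (M *v x t)) (at t)"
  shows "x (a+1) = mat_exp M *v x a"
proof -
  have "l \<bullet> (x (a+1) - mat_exp M *v x a) = 0" if l: "l \<in> L" for l
  proof -
    obtain \<kappa> where \<kappa>: "\<And>v. l \<bullet> (M *v v) = \<kappa> * (l \<bullet> v)" using eig[OF l] by blast
    have "l \<bullet> x (a+1) = exp \<kappa> * (l \<bullet> x a)"
      using left_eigvec_linear_ode[of a "a+1", OF _ cont deriv \<kappa>] by simp
    then show ?thesis by (simp add: inner_diff_right left_eigvec_mat_exp[OF summable \<kappa>])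
  qed
  then have "x (a+1) - mat_exp M *v x a = 0" by (intro separating) blast
  then show ?thesis by simp
qed

subsection \<open>The exponential of the coupling matrix\<close>

text \<open>For \<open>p q = 1/4\<close> these are the spectral projections of \<open>coupling_mat p q\<close> onto the
  eigenspaces of \<open>-1/2\<close> and \<open>-3/2\<close>.\<close>

definition coupling_proj_slow :: "real \<Rightarrow> real \<Rightarrow> real^2^2" where
  "coupling_proj_slow p q = vector [vector [1/2, p], vector [q, 1/2]]"

definition coupling_proj_fast :: "real \<Rightarrow> real \<Rightarrow> real^2^2" where
  "coupling_proj_fast p q = vector [vector [1/2, -p], vector [-q, 1/2]]"

lemma coupling_mat_mult_proj_slow:
  assumes "p * q = 1/4"
  shows "coupling_mat p q ** coupling_proj_slow p q = (-1/2) *\<^sub>R coupling_proj_slow p q"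
  using assms by (simp add: vec_eq_iff forall_2 matrix_matrix_mult_2 coupling_proj_slow_def
      coupling_mat_def algebra_simps)

lemma coupling_mat_mult_proj_fast:
  assumes "p * q = 1/4"
  shows "coupling_mat p q ** coupling_proj_fast p q = (-3/2) *\<^sub>R coupling_proj_fast p q"
  using assms by (simp add: vec_eq_iff forall_2 matrix_matrix_mult_2 coupling_proj_fast_def
      coupling_mat_def algebra_simps)

lemma coupling_proj_slow_add_fast: "coupling_proj_slow p q + coupling_proj_fast p q = mat 1"
  by (simp add: vec_eq_iff forall_2 coupling_proj_slow_def coupling_proj_fast_def mat_def)

lemma mat_pow_coupling_mat:
  assumes "p * q = 1/4"
  shows "mat_pow (coupling_mat p q) k
           = (-1/2)^k *\<^sub>R coupling_proj_slow p q + (-3/2)^k *\<^sub>R coupling_proj_fast p q"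
proof (induction k)
  case 0
  show ?case using coupling_proj_slow_add_fast by simp
next
  case (Suc k)
  have "mat_pow (coupling_mat p q) (Suc k)
      = (-1/2)^k *\<^sub>R (coupling_mat p q ** coupling_proj_slow p q)
        + (-3/2)^k *\<^sub>R (coupling_mat p q ** coupling_proj_fast p q)"
    by (simp only: mat_pow.simps Suc matrix_add_ldistrib matrix_scalar_ac scalar_matrix_assoc)
  then show ?case
    by (simp add: coupling_mat_mult_proj_slow[OF assms] coupling_mat_mult_proj_fast[OF assms])
qed

lemma coupling_mat_exp_series_sums:
  assumes "p * q = 1/4"
  shows "(\<lambda>k. (1 / fact k) *\<^sub>R mat_pow (coupling_mat p q) k)
           sums (exp (-1/2) *\<^sub>R coupling_proj_slow p q + exp (-3/2) *\<^sub>R coupling_proj_fast p q)"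
proof -
  have "(\<lambda>k. ((-1/2::real)^k /\<^sub>R fact k) *\<^sub>R coupling_proj_slow p q
            + ((-3/2::real)^k /\<^sub>R fact k) *\<^sub>R coupling_proj_fast p q)
        sums (exp (-1/2) *\<^sub>R coupling_proj_slow p q + exp (-3/2) *\<^sub>R coupling_proj_fast p q)"
    by (intro sums_add sums_scaleR_left exp_converges)
  then show ?thesis
    by (simp add: mat_pow_coupling_mat[OF assms] scaleR_add_right field_split_simps)
qed

lemma mat_exp_coupling_mat:
  assumes "p * q = 1/4"
  shows "mat_exp (coupling_mat p q)
           = exp (-1) *\<^sub>R vector [vector [cosh (1/2), 2*p * sinh (1/2)],
                                  vector [2*q * sinh (1/2), cosh (1/2)]]"
proof -
  have "mat_exp (coupling_mat p q)
      = exp (-1/2) *\<^sub>R coupling_proj_slow p q + exp (-3/2) *\<^sub>R coupling_proj_fast p q"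
    using sums_unique[OF coupling_mat_exp_series_sums[OF assms]] by (simp add: mat_exp_def)
  then show ?thesis
    by (simp add: vec_eq_iff forall_2 coupling_proj_slow_def coupling_proj_fast_def
        cosh_def sinh_def algebra_simps mult_exp_exp)
qed

lemma coupling_mat_unit_step:
  fixes x :: "real \<Rightarrow> real^2"
  assumes "p \<noteq> 0" "p * q = 1/4" "continuous_on {a..a+1} x"
    and "\<And>t. a < t \<Longrightarrow> t < a+1 \<Longrightarrow> (x has_vector_derivative (coupling_mat p q *v x t)) (at t)"
  shows "x (a+1) = mat_exp (coupling_mat p q) *v x a"
proof (rule linear_ode_unit_step[where L = "{vector [1, 2*p], vector [1, -2*p]}"])
  show "summable (\<lambda>k. (1 / fact k) *\<^sub>R mat_pow (coupling_mat p q) k)"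
    using coupling_mat_exp_series_sums[OF assms(2)] by (rule sums_summable)
  have "vector [1, 2*p] \<bullet> (coupling_mat p q *v v) = (-1/2) * (vector [1, 2*p] \<bullet> v)"
    and "vector [1, -2*p] \<bullet> (coupling_mat p q *v v) = (-3/2) * (vector [1, -2*p] \<bullet> v)" for v
  proof -
    have "vector [1, 2*p] \<bullet> (coupling_mat p q *v v) = (- v$1 + p * v$2) + 2*p*(q * v$1 - v$2)"
      and "vector [1, -2*p] \<bullet> (coupling_mat p q *v v) = (- v$1 + p * v$2) - 2*p*(q * v$1 - v$2)"
      by (simp_all add: inner_vec_2 matrix_vector_mult_2 coupling_mat_entries)
    moreover have "(- v$1 + p * v$2) + 2*p*(q * v$1 - v$2) = (-1/2) * (v$1 + 2*p * v$2)"
      and "(- v$1 + p * v$2) - 2*p*(q * v$1 - v$2) = (-3/2) * (v$1 - 2*p * v$2)"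
      using assms(2) by algebra+
    ultimately show "vector [1, 2*p] \<bullet> (coupling_mat p q *v v) = (-1/2) * (vector [1, 2*p] \<bullet> v)"
      and "vector [1, -2*p] \<bullet> (coupling_mat p q *v v) = (-3/2) * (vector [1, -2*p] \<bullet> v)"
      by (simp_all add: inner_vec_2)
  qed
  then show "\<exists>\<kappa>. \<forall>v. l \<bullet> (coupling_mat p q *v v) = \<kappa> * (l \<bullet> v)"
    if "l \<in> {vector [1, 2*p], vector [1, -2*p]}" for l
    using that by blast
  show "u = 0" if "\<forall>l\<in>{vector [1, 2*p], vector [1, -2*p]}. l \<bullet> u = 0" for u :: "real^2"
  proof -
    from that have "vector [1, 2*p] \<bullet> u = 0" "vector [1, -2*p] \<bullet> u = 0" by simp_all
    then have "u$1 + 2*p * u$2 = 0" "u$1 - 2*p * u$2 = 0" by (simp_all add: inner_vec_2)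
    then have "u$1 = 0" "p * u$2 = 0" by linarith+
    with assms(1) show "u = 0" by (simp add: vec_eq_iff forall_2)
  qed
qed (use assms in auto)

lemma Apw_eq_A1:
  assumes "2 * real n < t" "t < 2 * real n + 1"
  shows "Apw c t = A1 c"
proof -
  have "\<lfloor>t\<rfloor> = 2 * int n" using assms by (intro floor_unique) simp_all
  then show ?thesis by (simp add: Apw_def)
qed

lemma Apw_eq_A2:
  assumes "2 * real n + 1 < t" "t < 2 * real n + 2"
  shows "Apw c t = A2 c"
proof -
  have "\<lfloor>t\<rfloor> = 2 * int n + 1" using assms by (intro floor_unique) simp_all
  then show ?thesis by (simp add: Apw_def)
qed

lemma is_solution_has_vector_derivative:
  assumes "is_solution A x" "of_int k < t" "t < of_int k + 1"
  shows "(x has_vector_derivative (A t *v x t)) (at t)"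
proof -
  have "t \<notin> \<int>"
  proof
    assume "t \<in> \<int>"
    then obtain m where "t = of_int m" by (auto elim: Ints_cases)
    with assms(2,3) have "k < m" "m < k + 1" by simp_all
    then show False by simp
  qed
  then show ?thesis using assms(1) by (simp add: is_solution_def)
qed

definition monodromy :: "real \<Rightarrow> real^2^2" where
  "monodromy c = mat_exp (A2 c) ** mat_exp (A1 c)"

lemma solution_period_step:
  assumes "c > 0" "is_solution (Apw c) x"
  shows "x (2 * real (Suc n)) = monodromy c *v x (2 * real n)"
proof -
  have cont: "continuous_on S x" for S
    using assms(2) continuous_on_subset by (auto simp: is_solution_def)
  have deriv: "(x has_vector_derivative (Apw c t *v x t)) (at t)"
    if "of_int k < t" "t < of_int k + 1" for k t
    using is_solution_has_vector_derivative[OF assms(2) that] .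
  have "x (2 * real n + 1) = mat_exp (A1 c) *v x (2 * real n)"
    unfolding A1_eq_coupling_mat
  proof (rule coupling_mat_unit_step[OF _ _ cont])
    fix t assume t: "2 * real n < t" "t < 2 * real n + 1"
    then show "(x has_vector_derivative (coupling_mat c (1 / (4*c)) *v x t)) (at t)"
      using deriv[of "2 * int n" t] Apw_eq_A1[OF t, of c] by (simp add: A1_eq_coupling_mat)
  qed (use assms(1) in simp_all)
  moreover have "x (2 * real n + 1 + 1) = mat_exp (A2 c) *v x (2 * real n + 1)"
    unfolding A2_eq_coupling_mat
  proof (rule coupling_mat_unit_step[OF _ _ cont])
    fix t assume t: "2 * real n + 1 < t" "t < 2 * real n + 1 + 1"
    then show "(x has_vector_derivative (coupling_mat (1 / (4*c)) c *v x t)) (at t)"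
      using deriv[of "2 * int n + 1" t] Apw_eq_A2[of n t c] by (simp add: A2_eq_coupling_mat)
  qed (use assms(1) in simp_all)
  ultimately show ?thesis
    by (simp add: monodromy_def matrix_vector_mul_assoc add.assoc add.commute)
qed

lemma monodromy_entries:
  assumes "c > 0"
  shows "monodromy c $ 1 $ 1 = exp (-2) * ((cosh (1/2))^2 + (sinh (1/2))^2 / (4 * c^2))"
    and "monodromy c $ 1 $ 2 = exp (-2) * (2*c + 1 / (2*c)) * cosh (1/2) * sinh (1/2)"
    and "monodromy c $ 2 $ 1 = exp (-2) * (2*c + 1 / (2*c)) * cosh (1/2) * sinh (1/2)"
    and "monodromy c $ 2 $ 2 = exp (-2) * ((cosh (1/2))^2 + 4 * c^2 * (sinh (1/2))^2)"
  using assms mult_exp_exp[of "-1::real" "-1", symmetric]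
  by (simp_all add: monodromy_def A1_eq_coupling_mat A2_eq_coupling_mat mat_exp_coupling_mat
      matrix_matrix_mult_2 power2_eq_square field_simps)

lemma monodromy_pos:
  assumes "c > 0"
  shows "monodromy c $ i $ j > 0"
proof -
  have "sinh (1/2::real) > 0" "cosh (1/2::real) > 0" "2*c + 1 / (2*c) > 0"
    using assms by (simp_all add: add_pos_pos)
  then show ?thesis
    using assms exhaust_2[of i] exhaust_2[of j]
    by (auto simp: monodromy_entries intro!: mult_pos_pos add_pos_pos add_pos_nonneg)
qed

lemma monodromy_principal_eigenvalue:
  assumes "c > 0" "(cosh (1/2))^2 + 4 * c^2 * (sinh (1/2))^2 > exp 2"
  obtains \<mu> where "\<mu> \<in> eigenvalues (monodromy c)" "\<forall>l\<in>eigenvalues (monodromy c). l \<le> \<mu>" "\<mu> > 1"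
proof -
  let ?P = "monodromy c"
  define \<mu> where "\<mu> = (?P$1$1 + ?P$2$2)/2 + sqrt (((?P$1$1 - ?P$2$2)/2)^2 + (?P$1$2)^2)"
  have "?P$1$2 \<noteq> 0" using monodromy_pos[OF assms(1)] by (metis less_irrefl)
  then have char: "eigenvalues ?P = {l. (l - ?P$1$1) * (l - ?P$2$2) = (?P$1$2)^2}"
    using eigenvalues_2x2 assms(1) by (simp add: monodromy_entries(2,3) power2_eq_square)
  have "?P$2$2 > exp (-2) * exp 2"
    using assms by (simp add: monodromy_entries(4))
  then have "?P$2$2 > 1" by (simp add: mult_exp_exp)
  then have "\<mu> > 1"
    using sym_char_root_max(3)[where a = "?P$1$1" and d = "?P$2$2" and b = "?P$1$2"] unfolding \<mu>_def by linarith
  moreover have "\<mu> \<in> eigenvalues ?P"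
    using sym_char_root_max(1) unfolding char \<mu>_def by simp
  moreover have "\<forall>l\<in>eigenvalues ?P. l \<le> \<mu>"
    using sym_char_root_max(2) unfolding char \<mu>_def by simp
  ultimately show ?thesis using that by blast
qed

lemma norm_power_scaleR_at_top:
  fixes w :: "'a::real_normed_vector"
  assumes "\<mu> > 1" "w \<noteq> 0"
  shows "filterlim (\<lambda>n. norm (\<mu> ^ n *\<^sub>R w)) at_top sequentially"
proof -
  have "filterlim (\<lambda>n. norm w * norm (\<mu> ^ n)) at_top sequentially"
    using assms
    by (intro filterlim_tendsto_pos_mult_at_top[OF tendsto_const]
        filterlim_at_infinity_imp_norm_at_top filterlim_realpow_sequentially_gt1) simp_all
  then show ?thesis by (simp add: mult.commute)
qed

theorem mainTheorem1:
  fixes c :: real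
  assumes "c > 0"
    and "(cosh (1/2))^2 + 4 * c^2 * (sinh (1/2))^2 > exp 2"
  shows "(\<forall>t. Apw c t $ 1 $ 2 > 0 \<and> Apw c t $ 2 $ 1 > 0 \<and>
              eigenvalues (Apw c t) = {-1/2, -3/2})
    \<and> (let P = mat_exp (A2 c) ** mat_exp (A1 c) in
         (\<forall>i j. P $ i $ j > 0) \<and>
         (\<exists>\<mu>. \<mu> \<in> eigenvalues P \<and> (\<forall>l\<in>eigenvalues P. l \<le> \<mu>) \<and> \<mu> > 1 \<and>
            (\<forall>w x. (\<forall>i. w $ i > 0) \<and> P *v w = \<mu> *\<^sub>R w \<and>
                   is_solution (Apw c) x \<and> x 0 = w \<longrightarrow>
                   (\<forall>n::nat. n \<ge> 1 \<longrightarrow> x (2 * real n) = \<mu> ^ n *\<^sub>R w) \<and>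
                   filterlim (\<lambda>n::nat. norm (x (2 * real n))) at_top sequentially)))"
proof -
  obtain \<mu> where \<mu>: "\<mu> \<in> eigenvalues (monodromy c)" "\<forall>l\<in>eigenvalues (monodromy c). l \<le> \<mu>" "\<mu> > 1"
    using monodromy_principal_eigenvalue[OF assms] .
  have "x (2 * real n) = \<mu> ^ n *\<^sub>R w \<and> filterlim (\<lambda>n. norm (x (2 * real n))) at_top sequentially"
    if w: "\<forall>i. w $ i > 0" "monodromy c *v w = \<mu> *\<^sub>R w" and x: "is_solution (Apw c) x" "x 0 = w"
    for w x n
  proof -
    have x_even: "x (2 * real n) = \<mu> ^ n *\<^sub>R w" for n
    proof (induction n)
      case (Suc n)
      then show ?case
        using solution_period_step[OF assms(1) x(1), of n] by (simp add: matrix_vector_mult_scaleR w(2))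
    qed (simp add: x(2))
    have "w \<noteq> 0" using w(1) by (metis less_irrefl zero_index)
    then show ?thesis
      using norm_power_scaleR_at_top[OF \<mu>(3)] by (simp add: x_even)
  qed
  then show ?thesis
    using assms(1) Apw_offdiag_pos eigenvalues_Apw monodromy_pos \<mu>
    unfolding Let_def monodromy_def[symmetric] by blast
qed

end
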